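(* Let $f:\Omega_D\to\mathbb{O}$ be a slice function of class $C^1$, $\mathbb I=(I,J)\in\mathcal N$, and assume $D$ is bounded with boundary of class $C^1$. Define $Q_I,M_I:\mathbb{O}^3\to\mathbb{O}$ and $N_I:\mathbb{O}^2\to\mathbb{O}$ by $Q_I(x,\xi,a)=(|x|^2+|\xi|^2)^2a-2(|x|^2+|\xi|^2)\big(x(\xi_Ia)+\overline x(\overline{\xi_I}a)\big)+x^2(\xi_I^2a)+\overline x^2(\overline{\xi_I}^2a)+2|x|^2|\xi_I|^2a$, $M_I(x,\xi,a)=Q_I(x,\xi,\overline\xi a)-\overline x\,Q_I(x,\xi,a)$, $N_I(x,\xi)=|\Delta_{\xi_I}(x)|^2+2|\xi_I^\perp|^2\big(|x|^2-2\mathrm{Re}(x)\mathrm{Re}(\xi_I)+|\xi_I|^2\big)+|\xi_I^\perp|^4$. Then the zero set of $N_I$ equals $\Gamma_I$, and $S_{f,\mathbb I}(x,\xi)=\dfrac{M_I(x,\xi,\mathtt n_{\mathbb I}(\xi)f(\xi))}{2\pi^2N_I(x,\xi)^2}$ for all $(x,\xi)\in\partial^*\Omega_{\mathbb I}$, and $V_{f,\mathbb I}(x,\xi)=\dfrac{M_I(x,\xi,\overline{\mathcal D}_{\mathbb I}f(\xi))}{2\pi^2N_I(x,\xi)^2}$ for all $(x,\xi)\in\Omega^*_{\mathbb I}$.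
   Context: Octonions $\mathbb{O}=\mathbb{H}+\ell\mathbb{H}$ (product $(a+\ell b)(c+\ell d)=(ac-d\bar b)+\ell(\bar a d+cb)$, conjugation $\overline{a+\ell b}=\bar a-\ell b$), identified with $\mathbb{R}^8$; $\mathrm{Re},\mathrm{Im}$ real and imaginary parts; $\mathbb S=\{I:I^2=-1\}$; $\mathbb C_I=\mathrm{Span}(1,I)$; $\mathcal N=\{(I,J)\in\mathbb S^2:I\perp J\}$; $\mathbb H_{\mathbb I}=\mathrm{Span}(1,I,J,IJ)$. $D\subset\mathbb{R}^2$ non-empty open, invariant under $(\alpha,\beta)\mapsto(\alpha,-\beta)$, $\Omega_D=\{\alpha+\beta K:(\alpha,\beta)\in D,K\in\mathbb S\}$, assumed connected; $E=\{(x_0,\dots,x_3):(x_0,(x_1^2+x_2^2+x_3^2)^{1/2})\in D\}$. Slice functions: $f(\alpha+\beta K)=F_1(\alpha,\beta)+KF_2(\alpha,\beta)$ with stem $(F_1,F_2)$, $F_1$ even and $F_2$ odd in $\beta$ (also on other circular domains such as $\mathbb{O}\setminus\mathbb S_{I,\xi}$). Slice product: stems multiply by $(F_1,F_2)(G_1,G_2)=(F_1G_1-F_2G_2,F_1G_2+F_2G_1)$; $f^c$ induced by $(\overline{F_1},\overline{F_2})$; $N(f)=f\cdot f^c$ (its stem is real-valued... i.e. it is slice preserving, and $x\mapsto N(f)(x)^{-2}$ is again slice). $\Delta_\eta(x)=x^2-2x\mathrm{Re}\,\eta+|\eta|^2$, $\mathbb S_\eta=\{\mathrm{Re}\,\eta+K|\mathrm{Im}\,\eta|:K\in\mathbb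 S\}$. For $\xi\in\mathbb{O}$: $\xi_I$ orthogonal projection onto $\mathbb C_I$, $\xi_I^\perp=\xi-\xi_I$, $g_{I,\xi}(x)=|x|^2-x\overline{\xi_I}-\overline x\xi_I+|\xi|^2$ (slice function), $\mathbb S_{I,\xi}=\mathbb S_\xi$ if $\xi\in\mathbb C_I$ and $\emptyset$ otherwise; $N(g_{I,\xi})$ vanishes exactly on $\mathbb S_{I,\xi}$. $\Gamma_I=\{(x,\xi)\in\mathbb{O}^2:\xi\in\mathbb C_I,x\in\mathbb S_\xi\}$. $\Omega_{\mathbb I}=\Omega_D\cap\mathbb H_{\mathbb I}$ (bounded with $C^1$ boundary $\partial\Omega_{\mathbb I}$ in $\mathbb H_{\mathbb I}$), $\mathtt n_{\mathbb I}$ its outer unit normal in $\mathbb H_{\mathbb I}$. $\partial^*\Omega_{\mathbb I}=(\mathbb{O}^2\setminus\Gamma_I)\cap(\mathbb{O}\times\partial\Omega_{\mathbb I})$, $\Omega^*_{\mathbb I}=(\mathbb{O}^2\setminus\Gamma_I)\cap(\mathbb{O}\times\Omega_{\mathbb I})$. With $f_{\mathbb I}(v)=f(x_0+x_1I+x_2J+x_3IJ)$, $\overline{\mathcal D}_{\mathbb I}f(\xi)=\partial_0f_{\mathbb I}+I\partial_1f_{\mathbb I}+J\partial_2f_{\mathbb I}+(IJ)\partial_3f_{\mathbb I}$ evaluated at the coordinates of $\xi$. For fixed $\xi$ and a constant $a\in\mathbb{O}$ let $h_{\xi,a}$ be the slice function $x\mapsto(\overline\xi-\overline x)a$; then $S_{f,\mathbb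 I}(x,\xi)$ (for $\xi\in\partial\Omega_{\mathbb I}$, $x\notin\mathbb S_{I,\xi}$) is the value at $x$ of the slice function $\frac1{2\pi^2}N(g_{I,\xi})^{-2}\cdot\big((g^c_{I,\xi}\cdot g^c_{I,\xi})\cdot h_{\xi,a}\big)$ with $a=\mathtt n_{\mathbb I}(\xi)f(\xi)$, and $V_{f,\mathbb I}(x,\xi)$ (for $\xi\in\Omega_{\mathbb I}$) is the same with $a=\overline{\mathcal D}_{\mathbb I}f(\xi)$. *)

theory Defs
  imports "HOL-Analysis.Analysis"
begin

text \<open>A quaternion a + b i + c j + d k is the tuple (a,b,c,d) in R^4; an octonion a + l b
  (a, b quaternions) is the pair (a,b) in R^4 x R^4 = R^8.  The product-type norm and
  inner product are the Euclidean ones, so this is the identification of O with R^8.\<close>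

type_synonym quat = "real \<times> real \<times> real \<times> real"
type_synonym oct = "quat \<times> quat"

definition qmul :: "quat \<Rightarrow> quat \<Rightarrow> quat" where
  "qmul p q = (case p of (a1,b1,c1,d1) \<Rightarrow> case q of (a2,b2,c2,d2) \<Rightarrow>
     (a1*a2 - b1*b2 - c1*c2 - d1*d2,
      a1*b2 + b1*a2 + c1*d2 - d1*c2,
      a1*c2 - b1*d2 + c1*a2 + d1*b2,
      a1*d2 + b1*c2 - c1*b2 + d1*a2))"

definition qcnj :: "quat \<Rightarrow> quat" where
  "qcnj p = (case p of (a,b,c,d) \<Rightarrow> (a,-b,-c,-d))"

definition omul :: "oct \<Rightarrow> oct \<Rightarrow> oct" where
  "omul x y = (qmul (fst x) (fst y) - qmul (snd y) (qcnj (snd x)),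
               qmul (qcnj (fst x)) (snd y) + qmul (fst y) (snd x))"

definition ocnj :: "oct \<Rightarrow> oct" where
  "ocnj x = (qcnj (fst x), - snd x)"

definition oone :: oct where "oone = ((1,0,0,0),(0,0,0,0))"

definition orl :: "real \<Rightarrow> oct" where "orl r = r *\<^sub>R oone"

definition oRe :: "oct \<Rightarrow> real" where "oRe x = fst (fst x)"

definition oIm :: "oct \<Rightarrow> oct" where "oIm x = x - orl (oRe x)"

text \<open>inverse of an octonion: conj(x)/|x|^2 (and 0 for x = 0)\<close>
definition oinv :: "oct \<Rightarrow> oct" where
  "oinv x = (1 / (norm x)\<^sup>2) *\<^sub>R ocnj x"

definition sphS :: "oct set" where "sphS = {I. omul I I = - oone}"

definition CI :: "oct \<Rightarrow> oct set" where "CI I = span {oone, I}"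

definition NN :: "(oct \<times> oct) set" where
  "NN = {(I,J). I \<in> sphS \<and> J \<in> sphS \<and> inner I J = 0}"

definition HI :: "oct \<Rightarrow> oct \<Rightarrow> oct set" where
  "HI I J = span {oone, I, J, omul I J}"

definition OmegaD :: "(real \<times> real) set \<Rightarrow> oct set" where
  "OmegaD D = {orl \<alpha> + \<beta> *\<^sub>R K | \<alpha> \<beta> K. (\<alpha>,\<beta>) \<in> D \<and> K \<in> sphS}"

definition sph_of :: "oct \<Rightarrow> oct set" where
  "sph_of \<eta> = {orl (oRe \<eta>) + norm (oIm \<eta>) *\<^sub>R K | K. K \<in> sphS}"

definition Delta :: "oct \<Rightarrow> oct \<Rightarrow> oct" where
  "Delta \<eta> x = omul x x - (2 * oRe \<eta>) *\<^sub>R x + ((norm \<eta>)\<^sup>2) *\<^sub>R oone"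

text \<open>xi_I: orthogonal projection of xi onto C_I (metric projection onto a subspace);
  xi_I^perp = xi - xi_I\<close>
definition projI :: "oct \<Rightarrow> oct \<Rightarrow> oct" where
  "projI I \<xi> = closest_point (CI I) \<xi>"

definition perpI :: "oct \<Rightarrow> oct \<Rightarrow> oct" where
  "perpI I \<xi> = \<xi> - projI I \<xi>"

definition SIxi :: "oct \<Rightarrow> oct \<Rightarrow> oct set" where
  "SIxi I \<xi> = (if \<xi> \<in> CI I then sph_of \<xi> else {})"

definition GammaI :: "oct \<Rightarrow> (oct \<times> oct) set" where
  "GammaI I = {(x,\<xi>). \<xi> \<in> CI I \<and> x \<in> sph_of \<xi>}"

definition slice_fun :: "(real \<times> real) set \<Rightarrow> (oct \<Rightarrow> oct) \<Rightarrow> bool" where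
  "slice_fun D f \<longleftrightarrow> (\<exists>F1 F2 :: real \<Rightarrow> real \<Rightarrow> oct.
     (\<forall>\<alpha> \<beta>. (\<alpha>,\<beta>) \<in> D \<longrightarrow> F1 \<alpha> (-\<beta>) = F1 \<alpha> \<beta> \<and> F2 \<alpha> (-\<beta>) = - F2 \<alpha> \<beta>) \<and>
     (\<forall>\<alpha> \<beta> K. (\<alpha>,\<beta>) \<in> D \<longrightarrow> K \<in> sphS \<longrightarrow>
        f (orl \<alpha> + \<beta> *\<^sub>R K) = F1 \<alpha> \<beta> + omul K (F2 \<alpha> \<beta>)))"

text \<open>The stem of a slice function f, recovered from its values on one slice C_{K0},
  K0 = i: F1 = (f(a+bK0)+f(a-bK0))/2, F2 = -K0 (f(a+bK0)-f(a-bK0))/2.\<close>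
definition K0 :: oct where "K0 = ((0,1,0,0),(0,0,0,0))"

definition stem_of :: "(oct \<Rightarrow> oct) \<Rightarrow> real \<times> real \<Rightarrow> oct \<times> oct" where
  "stem_of f p = (case p of (\<alpha>,\<beta>) \<Rightarrow>
     ((1/2) *\<^sub>R (f (orl \<alpha> + \<beta> *\<^sub>R K0) + f (orl \<alpha> - \<beta> *\<^sub>R K0)),
      - (1/2) *\<^sub>R omul K0 (f (orl \<alpha> + \<beta> *\<^sub>R K0) - f (orl \<alpha> - \<beta> *\<^sub>R K0))))"

definition induced :: "(real \<times> real \<Rightarrow> oct \<times> oct) \<Rightarrow> oct \<Rightarrow> oct" where
  "induced F x = fst (F (oRe x, norm (oIm x)))
      + omul ((1 / norm (oIm x)) *\<^sub>R oIm x) (snd (F (oRe x, norm (oIm x))))"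

definition sprod :: "(oct \<Rightarrow> oct) \<Rightarrow> (oct \<Rightarrow> oct) \<Rightarrow> oct \<Rightarrow> oct" where
  "sprod f g = induced (\<lambda>p.
     (omul (fst (stem_of f p)) (fst (stem_of g p)) - omul (snd (stem_of f p)) (snd (stem_of g p)),
      omul (fst (stem_of f p)) (snd (stem_of g p)) + omul (snd (stem_of f p)) (fst (stem_of g p))))"

definition sconj :: "(oct \<Rightarrow> oct) \<Rightarrow> oct \<Rightarrow> oct" where
  "sconj f = induced (\<lambda>p. (ocnj (fst (stem_of f p)), ocnj (snd (stem_of f p))))"

definition snorm :: "(oct \<Rightarrow> oct) \<Rightarrow> oct \<Rightarrow> oct" where
  "snorm f = sprod f (sconj f)"

definition gI :: "oct \<Rightarrow> oct \<Rightarrow> oct \<Rightarrow> oct" where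
  "gI I \<xi> x = ((norm x)\<^sup>2) *\<^sub>R oone - omul x (ocnj (projI I \<xi>))
                - omul (ocnj x) (projI I \<xi>) + ((norm \<xi>)\<^sup>2) *\<^sub>R oone"

definition hfun :: "oct \<Rightarrow> oct \<Rightarrow> oct \<Rightarrow> oct" where
  "hfun \<xi> a x = omul (ocnj \<xi> - ocnj x) a"

text \<open>value at x of the slice function
  1/(2 pi^2) N(g)^{-2} . ((g^c . g^c) . h_{xi,a}); the slice function x -> N(g)(x)^{-2}
  is taken pointwise.\<close>
definition kernel :: "oct \<Rightarrow> oct \<Rightarrow> oct \<Rightarrow> oct \<Rightarrow> oct" where
  "kernel I \<xi> a x = (1 / (2 * pi\<^sup>2)) *\<^sub>R
     sprod (\<lambda>y. omul (oinv (snorm (gI I \<xi>) y)) (oinv (snorm (gI I \<xi>) y)))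
           (sprod (sprod (sconj (gI I \<xi>)) (sconj (gI I \<xi>))) (hfun \<xi> a)) x"

definition phiI :: "oct \<Rightarrow> oct \<Rightarrow> quat \<Rightarrow> oct" where
  "phiI I J v = (case v of (x0,x1,x2,x3) \<Rightarrow>
      orl x0 + x1 *\<^sub>R I + x2 *\<^sub>R J + x3 *\<^sub>R omul I J)"

definition coordsI :: "oct \<Rightarrow> oct \<Rightarrow> oct \<Rightarrow> quat" where
  "coordsI I J \<xi> = inv_into UNIV (phiI I J) \<xi>"

definition OmegaI :: "(real \<times> real) set \<Rightarrow> oct \<Rightarrow> oct \<Rightarrow> oct set" where
  "OmegaI D I J = OmegaD D \<inter> HI I J"

text \<open>boundary of Omega_I inside H_I (Omega_I is relatively open in the closed set H_I)\<close>
definition bdI :: "(real \<times> real) set \<Rightarrow> oct \<Rightarrow> oct \<Rightarrow> oct set" where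
  "bdI D I J = closure (OmegaI D I J) - OmegaI D I J"

definition C1_on :: "'a::real_normed_vector set \<Rightarrow> ('a \<Rightarrow> 'b::real_normed_vector) \<Rightarrow> bool" where
  "C1_on S f \<longleftrightarrow> (\<exists>f'. (\<forall>x\<in>S. (f has_derivative blinfun_apply (f' x)) (at x))
                       \<and> continuous_on S f')"

definition is_outer_normal :: "'a::euclidean_space set \<Rightarrow> 'a \<Rightarrow> 'a \<Rightarrow> bool" where
  "is_outer_normal U p \<nu> \<longleftrightarrow> (\<exists>r>0. \<exists>(\<rho>::'a \<Rightarrow> real) g.
      (\<forall>x\<in>ball p r. (\<rho> has_derivative (\<lambda>h. inner (g x) h)) (at x)) \<and>
      continuous_on (ball p r) g \<and> g p \<noteq> 0 \<and>
      (\<forall>x\<in>ball p r. x \<in> U \<longleftrightarrow> \<rho> x < 0) \<and>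
      \<nu> = (1 / norm (g p)) *\<^sub>R g p)"

definition C1_boundary :: "'a::euclidean_space set \<Rightarrow> bool" where
  "C1_boundary U \<longleftrightarrow> (\<forall>p\<in>frontier U. \<exists>\<nu>. is_outer_normal U p \<nu>)"

definition outer_normal :: "'a::euclidean_space set \<Rightarrow> 'a \<Rightarrow> 'a" where
  "outer_normal U p = (SOME \<nu>. is_outer_normal U p \<nu>)"

text \<open>n_I(xi): outer unit normal of Omega_I in H_I, transported from the coordinate
  domain phi_I^{-1}(Omega_I) in R^4 by the linear isometry phi_I\<close>
definition normalI :: "(real \<times> real) set \<Rightarrow> oct \<Rightarrow> oct \<Rightarrow> oct \<Rightarrow> oct" where
  "normalI D I J \<xi> = phiI I J (outer_normal (phiI I J -` OmegaI D I J) (coordsI I J \<xi>))"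

definition DbarI :: "oct \<Rightarrow> oct \<Rightarrow> (oct \<Rightarrow> oct) \<Rightarrow> oct \<Rightarrow> oct" where
  "DbarI I J f \<xi> =
     (let v = coordsI I J \<xi>; d = frechet_derivative (\<lambda>w. f (phiI I J w)) (at v) in
        d (1,0,0,0) + omul I (d (0,1,0,0)) + omul J (d (0,0,1,0)) + omul (omul I J) (d (0,0,0,1)))"

definition SfI :: "(real \<times> real) set \<Rightarrow> (oct \<Rightarrow> oct) \<Rightarrow> oct \<Rightarrow> oct \<Rightarrow> oct \<Rightarrow> oct \<Rightarrow> oct" where
  "SfI D f I J x \<xi> = kernel I \<xi> (omul (normalI D I J \<xi>) (f \<xi>)) x"

definition VfI :: "(oct \<Rightarrow> oct) \<Rightarrow> oct \<Rightarrow> oct \<Rightarrow> oct \<Rightarrow> oct \<Rightarrow> oct" where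
  "VfI f I J x \<xi> = kernel I \<xi> (DbarI I J f \<xi>) x"

definition QI :: "oct \<Rightarrow> oct \<Rightarrow> oct \<Rightarrow> oct \<Rightarrow> oct" where
  "QI I x \<xi> a =
     ((norm x)\<^sup>2 + (norm \<xi>)\<^sup>2)\<^sup>2 *\<^sub>R a
     - (2 * ((norm x)\<^sup>2 + (norm \<xi>)\<^sup>2)) *\<^sub>R
         (omul x (omul (projI I \<xi>) a) + omul (ocnj x) (omul (ocnj (projI I \<xi>)) a))
     + omul (omul x x) (omul (omul (projI I \<xi>) (projI I \<xi>)) a)
     + omul (omul (ocnj x) (ocnj x)) (omul (omul (ocnj (projI I \<xi>)) (ocnj (projI I \<xi>))) a)
     + (2 * (norm x)\<^sup>2 * (norm (projI I \<xi>))\<^sup>2) *\<^sub>R a"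

definition MI :: "oct \<Rightarrow> oct \<Rightarrow> oct \<Rightarrow> oct \<Rightarrow> oct" where
  "MI I x \<xi> a = QI I x \<xi> (omul (ocnj \<xi>) a) - omul (ocnj x) (QI I x \<xi> a)"

text \<open>N_I is real valued (a real octonion); we take it as a real number\<close>
definition NI :: "oct \<Rightarrow> oct \<Rightarrow> oct \<Rightarrow> real" where
  "NI I x \<xi> = (norm (Delta (projI I \<xi>) x))\<^sup>2
     + 2 * (norm (perpI I \<xi>))\<^sup>2 * ((norm x)\<^sup>2 - 2 * oRe x * oRe (projI I \<xi>) + (norm (projI I \<xi>))\<^sup>2)
     + (norm (perpI I \<xi>))^4"

end

theory Submission
  imports Defs
begin

text \<open>Write \<open>x = \<alpha> + \<beta>K\<close> with \<open>K \<in> sphS\<close> and \<open>\<beta> = |Im x| \<ge> 0\<close>; a slice function is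
  determined by its stem, and the slice product multiplies stems. Split \<open>\<xi>\<^sub>I = a\<^sub>0 + d\<close> with
  \<open>d\<close> imaginary. Then \<open>g = g\<^sub>I\<^sub>,\<^sub>\<xi>\<close> has stem \<open>(F, 2\<beta>d)\<close> with \<open>F = \<alpha>\<^sup>2 + \<beta>\<^sup>2 - 2\<alpha>a\<^sub>0 + |\<xi>|\<^sup>2\<close>,
  so \<open>N(g)\<close> has the real stem \<open>F\<^sup>2 - 4\<beta>\<^sup>2|d|\<^sup>2\<close>. Since \<open>|\<xi>|\<^sup>2 = |\<xi>\<^sub>I|\<^sup>2 + |\<xi>\<^sub>I\<^sup>\<bottom>|\<^sup>2\<close>, this is
  \<open>N\<^sub>I(x,\<xi>)\<close>, a sum of squares which vanishes exactly on \<open>\<Gamma>\<^sub>I\<close>. Likewise \<open>g\<^sup>c \<cdot> g\<^sup>c\<close> has stem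
  \<open>(F\<^sup>2 + 4\<beta>\<^sup>2|d|\<^sup>2, -4\<beta>Fd)\<close>, and its slice product with a constant \<open>b\<close> takes the value
  \<open>Q\<^sub>I(x,\<xi>,b)\<close> at \<open>x\<close>. As \<open>h\<^sub>\<xi>\<^sub>,\<^sub>a\<close> is the constant \<open>conj \<xi> a\<close> minus \<open>conj x a\<close>, and the first
  stem component of \<open>g\<^sup>c \<cdot> g\<^sup>c\<close> is real, \<open>((g\<^sup>c \<cdot> g\<^sup>c) \<cdot> h\<^sub>\<xi>\<^sub>,\<^sub>a)(x) = Q\<^sub>I(x,\<xi>,conj \<xi> a) - conj x Q\<^sub>I(x,\<xi>,a)\<close>,
  which is \<open>M\<^sub>I(x,\<xi>,a)\<close>. Finally \<open>N(g)\<^sup>-\<^sup>2\<close> has a real stem, and slice multiplication by such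
  a function is pointwise multiplication.\<close>

lemmas oct_coords = omul_def qmul_def qcnj_def case_prod_unfold prod_eq_iff

lemma oct_cases: obtains a0 a1 a2 a3 a4 a5 a6 a7 where "x = ((a0,a1,a2,a3),(a4,a5,a6,a7))"
  by (metis prod.exhaust)

lemma omul_add_left: "omul (x + y) z = omul x z + omul y z"
  by (simp add: oct_coords algebra_simps)
lemma omul_add_right: "omul z (x + y) = omul z x + omul z y"
  by (simp add: oct_coords algebra_simps)
lemma omul_diff_left: "omul (x - y) z = omul x z - omul y z"
  by (simp add: oct_coords algebra_simps)
lemma omul_diff_right: "omul z (x - y) = omul z x - omul z y"
  by (simp add: oct_coords algebra_simps)
lemma omul_minus_left: "omul (- x) z = - omul x z"
  by (simp add: oct_coords algebra_simps)
lemma omul_minus_right: "omul z (- x) = - omul z x"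
  by (simp add: oct_coords algebra_simps)
lemma omul_zero_left: "omul 0 z = 0"
  by (simp add: oct_coords)
lemma omul_zero_right: "omul z 0 = 0"
  by (simp add: oct_coords)
lemma omul_scaleR_left: "omul (r *\<^sub>R x) z = r *\<^sub>R omul x z"
  by (simp add: oct_coords algebra_simps)
lemma omul_scaleR_right: "omul z (r *\<^sub>R x) = r *\<^sub>R omul z x"
  by (simp add: oct_coords algebra_simps)
lemma omul_oone_left: "omul oone z = z"
  by (simp add: oct_coords oone_def)
lemma omul_oone_right: "omul z oone = z"
  by (simp add: oct_coords oone_def)

lemma oRe_add: "oRe (x + y) = oRe x + oRe y" by (simp add: oRe_def)
lemma oRe_diff: "oRe (x - y) = oRe x - oRe y" by (simp add: oRe_def)
lemma oRe_minus: "oRe (- x) = - oRe x" by (simp add: oRe_def)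
lemma oRe_scaleR: "oRe (r *\<^sub>R x) = r * oRe x" by (simp add: oRe_def)
lemma oRe_oone: "oRe oone = 1" by (simp add: oRe_def oone_def)
lemma oRe_zero: "oRe 0 = 0" by (simp add: oRe_def)

lemma ocnj_add: "ocnj (x + y) = ocnj x + ocnj y"
  by (simp add: ocnj_def qcnj_def case_prod_unfold)
lemma ocnj_diff: "ocnj (x - y) = ocnj x - ocnj y"
  by (simp add: ocnj_def qcnj_def case_prod_unfold)
lemma ocnj_minus: "ocnj (- x) = - ocnj x"
  by (simp add: ocnj_def qcnj_def case_prod_unfold)
lemma ocnj_scaleR: "ocnj (r *\<^sub>R x) = r *\<^sub>R ocnj x"
  by (simp add: ocnj_def qcnj_def case_prod_unfold)
lemma ocnj_oone: "ocnj oone = oone"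
  by (simp add: ocnj_def qcnj_def oone_def)
lemma ocnj_zero: "ocnj 0 = 0"
  by (simp add: ocnj_def qcnj_def case_prod_unfold zero_prod_def)

lemmas oct_linear_simps = omul_add_left omul_add_right omul_diff_left omul_diff_right
  omul_minus_left omul_minus_right omul_zero_left omul_zero_right omul_scaleR_left
  omul_scaleR_right omul_oone_left omul_oone_right oRe_add oRe_diff oRe_minus oRe_scaleR
  oRe_oone oRe_zero ocnj_add ocnj_diff ocnj_minus ocnj_scaleR ocnj_oone ocnj_zero

lemma ocnj_imag: "oRe U = 0 \<Longrightarrow> ocnj U = - U"
  by (cases U rule: oct_cases) (simp add: ocnj_def qcnj_def oRe_def)

lemma inner_oone: "inner oone x = oRe x"
  by (cases x rule: oct_cases) (simp add: oone_def oRe_def)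

lemma norm_oone: "norm oone = 1"
  by (simp add: oone_def norm_Pair)

lemma omul_imag_imag:
  assumes "oRe U = 0" shows "omul U (omul U y) = - (norm U)\<^sup>2 *\<^sub>R y"
proof -
  obtain a0 a1 a2 a3 a4 a5 a6 a7 where U: "U = ((a0,a1,a2,a3),(a4,a5,a6,a7))" by (rule oct_cases)
  obtain b0 b1 b2 b3 b4 b5 b6 b7 where y: "y = ((b0,b1,b2,b3),(b4,b5,b6,b7))" by (rule oct_cases)
  show ?thesis using assms unfolding power2_norm_eq_inner U y
    by (simp add: oct_coords oRe_def algebra_simps power2_eq_square)
qed

lemma omul_imag_self: "oRe U = 0 \<Longrightarrow> omul U U = - (norm U)\<^sup>2 *\<^sub>R oone"
  using omul_imag_imag[of U oone] by (simp add: omul_oone_right)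

lemma oRe_oIm: "oRe (oIm x) = 0"
  by (simp add: oIm_def orl_def oRe_diff oRe_scaleR oRe_oone)

lemma oRe_oIm_decomp: "x = oRe x *\<^sub>R oone + oIm x"
  by (simp add: oIm_def orl_def)

lemma norm_real_imag_sq: "oRe U = 0 \<Longrightarrow> (norm (p *\<^sub>R oone + U))\<^sup>2 = p\<^sup>2 + (norm U)\<^sup>2"
  unfolding power2_norm_eq_inner
  by (simp add: inner_add_left inner_add_right inner_oone oRe_oone inner_commute[of U oone]
      power2_eq_square)

lemma sphS_iff: "K \<in> sphS \<longleftrightarrow> oRe K = 0 \<and> norm K = 1"
proof
  assume "oRe K = 0 \<and> norm K = 1"
  then show "K \<in> sphS" by (simp add: sphS_def omul_imag_self)
next
  assume "K \<in> sphS"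
  define r where "r = oRe K"
  define U where "U = oIm K"
  have U: "oRe U = 0" unfolding U_def by (rule oRe_oIm)
  have K: "K = r *\<^sub>R oone + U" unfolding r_def U_def by (rule oRe_oIm_decomp)
  have "omul K K = (r\<^sup>2 - (norm U)\<^sup>2) *\<^sub>R oone + (2 * r) *\<^sub>R U"
    unfolding K by (simp add: oct_linear_simps omul_imag_self[OF U] power2_eq_square
        algebra_simps flip: scaleR_2)
  with \<open>K \<in> sphS\<close> have sq: "(r\<^sup>2 - (norm U)\<^sup>2) *\<^sub>R oone + (2 * r) *\<^sub>R U = - oone"
    by (simp add: sphS_def)
  have "oRe ((r\<^sup>2 - (norm U)\<^sup>2) *\<^sub>R oone + (2 * r) *\<^sub>R U) = oRe (- oone)"
    by (simp only: sq)
  then have re: "r\<^sup>2 - (norm U)\<^sup>2 = -1"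
    by (simp add: oct_linear_simps U)
  with sq have "r = 0 \<or> U = 0" by simp
  moreover have "U \<noteq> 0"
  proof
    assume "U = 0"
    with re have "r\<^sup>2 = -1" by simp
    moreover have "r\<^sup>2 \<ge> 0" by simp
    ultimately show False by linarith
  qed
  ultimately have "r = 0" by blast
  with re have "norm U = 1" using norm_ge_zero[of U] by (auto simp: power2_eq_1_iff)
  with \<open>r = 0\<close> show "oRe K = 0 \<and> norm K = 1" using K U by simp
qed

lemma sphS_imp_norm: "K \<in> sphS \<Longrightarrow> norm K = 1"
  by (simp add: sphS_iff)

lemma omul_sphS_sphS: "K \<in> sphS \<Longrightarrow> omul K (omul K y) = - y"
  by (simp add: omul_imag_imag sphS_iff)

lemma omul_sphS_self: "K \<in> sphS \<Longrightarrow> omul K K = - oone"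
  by (simp add: sphS_def)

lemma ocnj_sphS: "K \<in> sphS \<Longrightarrow> ocnj K = - K"
  by (simp add: ocnj_imag sphS_iff)

lemma oRe_orl: "oRe (orl \<alpha>) = \<alpha>"
  by (simp add: orl_def oRe_scaleR oRe_oone)

lemma oIm_orl: "oIm (orl \<alpha>) = 0"
  by (simp add: oIm_def oRe_orl)

lemma oRe_polar: "K \<in> sphS \<Longrightarrow> oRe (orl \<alpha> + \<beta> *\<^sub>R K) = \<alpha>"
  by (simp add: orl_def oct_linear_simps sphS_iff)

lemma oIm_polar: "K \<in> sphS \<Longrightarrow> oIm (orl \<alpha> + \<beta> *\<^sub>R K) = \<beta> *\<^sub>R K"
  by (simp add: oIm_def oRe_polar)

lemma norm_polar_sq: "K \<in> sphS \<Longrightarrow> (norm (orl \<alpha> + \<beta> *\<^sub>R K))\<^sup>2 = \<alpha>\<^sup>2 + \<beta>\<^sup>2"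
  by (simp add: orl_def norm_real_imag_sq oRe_scaleR sphS_iff power_mult_distrib)

lemma ocnj_polar: "K \<in> sphS \<Longrightarrow> ocnj (orl \<alpha> + \<beta> *\<^sub>R K) = orl \<alpha> - \<beta> *\<^sub>R K"
  by (simp add: orl_def oct_linear_simps ocnj_sphS)

lemma oct_polar:
  obtains K where "K \<in> sphS" "x = orl (oRe x) + norm (oIm x) *\<^sub>R K"
proof (cases "oIm x = 0")
  case True
  have "K0 \<in> sphS" by (simp add: sphS_iff K0_def oRe_def norm_Pair)
  with True show ?thesis using oRe_oIm_decomp[of x] that by (simp add: orl_def)
next
  case False
  have "(1 / norm (oIm x)) *\<^sub>R oIm x \<in> sphS"
    using False by (simp add: sphS_iff oRe_scaleR oRe_oIm)
  with False show ?thesis using oRe_oIm_decomp[of x] that by (simp add: orl_def)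
qed

lemma sph_of_iff: "x \<in> sph_of \<eta> \<longleftrightarrow> oRe x = oRe \<eta> \<and> norm (oIm x) = norm (oIm \<eta>)"
proof
  assume "x \<in> sph_of \<eta>"
  then obtain K where "K \<in> sphS" "x = orl (oRe \<eta>) + norm (oIm \<eta>) *\<^sub>R K"
    by (auto simp: sph_of_def)
  then show "oRe x = oRe \<eta> \<and> norm (oIm x) = norm (oIm \<eta>)"
    by (simp add: oRe_polar oIm_polar sphS_imp_norm)
next
  assume "oRe x = oRe \<eta> \<and> norm (oIm x) = norm (oIm \<eta>)"
  moreover obtain K where "K \<in> sphS" "x = orl (oRe x) + norm (oIm x) *\<^sub>R K"
    by (rule oct_polar)
  ultimately show "x \<in> sph_of \<eta>" unfolding sph_of_def by (metis (mono_tags, lifting) mem_Collect_eq)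
qed

text \<open>\<open>has_stem f A B\<close>: the stem \<open>(A, B)\<close> represents \<open>f\<close> on the closed upper half plane
  \<open>\<beta> \<ge> 0\<close>, which is all that \<open>stem_of\<close> and \<open>induced\<close> look at. The condition \<open>B \<alpha> 0 = 0\<close> is
  forced by \<open>induced\<close>, which on the real axis divides by \<open>norm 0\<close> and so keeps only \<open>A\<close>.\<close>

definition has_stem :: "(oct \<Rightarrow> oct) \<Rightarrow> (real \<Rightarrow> real \<Rightarrow> oct) \<Rightarrow> (real \<Rightarrow> real \<Rightarrow> oct) \<Rightarrow> bool"
  where "has_stem f A B \<longleftrightarrow> (\<forall>\<alpha>. B \<alpha> 0 = 0) \<and>
     (\<forall>\<alpha> \<beta> K. 0 \<le> \<beta> \<longrightarrow> K \<in> sphS \<longrightarrow> f (orl \<alpha> + \<beta> *\<^sub>R K) = A \<alpha> \<beta> + omul K (B \<alpha> \<beta>))"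

lemma has_stemD:
  "has_stem f A B \<Longrightarrow> 0 \<le> \<beta> \<Longrightarrow> K \<in> sphS \<Longrightarrow> f (orl \<alpha> + \<beta> *\<^sub>R K) = A \<alpha> \<beta> + omul K (B \<alpha> \<beta>)"
  unfolding has_stem_def by blast

lemma has_stem_real_axis: "has_stem f A B \<Longrightarrow> B \<alpha> 0 = 0"
  by (simp add: has_stem_def)

lemma has_stem_cong:
  assumes "has_stem f A B"
    and "\<And>\<alpha> \<beta>. 0 \<le> \<beta> \<Longrightarrow> A \<alpha> \<beta> = A' \<alpha> \<beta>" "\<And>\<alpha> \<beta>. 0 \<le> \<beta> \<Longrightarrow> B \<alpha> \<beta> = B' \<alpha> \<beta>"
  shows "has_stem f A' B'"
  using assms unfolding has_stem_def by (metis order_refl)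

lemma has_stem_const: "has_stem (\<lambda>_. b) (\<lambda>_ _. b) (\<lambda>_ _. 0)"
  by (simp add: has_stem_def omul_zero_right)

lemma induced_has_stem:
  assumes P: "\<And>\<alpha> \<beta>. 0 \<le> \<beta> \<Longrightarrow> P (\<alpha>, \<beta>) = (A \<alpha> \<beta>, B \<alpha> \<beta>)" and B0: "\<And>\<alpha>. B \<alpha> 0 = 0"
  shows "has_stem (induced P) A B"
  unfolding has_stem_def
proof (intro conjI allI impI)
  fix \<alpha> \<beta> :: real and K assume "0 \<le> \<beta>" and K: "K \<in> sphS"
  then show "induced P (orl \<alpha> + \<beta> *\<^sub>R K) = A \<alpha> \<beta> + omul K (B \<alpha> \<beta>)"
    using P[of 0 \<alpha>] B0[of \<alpha>] P[of \<beta> \<alpha>]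
    by (cases "\<beta> = 0")
      (simp_all add: induced_def oRe_polar[OF K] oIm_polar[OF K] sphS_imp_norm[OF K]
        oRe_orl oIm_orl omul_zero_left omul_zero_right)
qed (rule B0)

lemma stem_of_eq:
  assumes f: "has_stem f A B" and "0 \<le> \<beta>"
  shows "stem_of f (\<alpha>, \<beta>) = (A \<alpha> \<beta>, B \<alpha> \<beta>)"
proof -
  have K0: "K0 \<in> sphS" "- K0 \<in> sphS" by (simp_all add: sphS_iff K0_def oRe_def norm_Pair)
  have "f (orl \<alpha> + \<beta> *\<^sub>R K0) = A \<alpha> \<beta> + omul K0 (B \<alpha> \<beta>)"
    "f (orl \<alpha> - \<beta> *\<^sub>R K0) = A \<alpha> \<beta> - omul K0 (B \<alpha> \<beta>)"
    using has_stemD[OF f \<open>0 \<le> \<beta>\<close> K0(1)] has_stemD[OF f \<open>0 \<le> \<beta>\<close> K0(2)]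
    by (simp_all add: omul_minus_left)
  moreover have "- ((1 / 2) *\<^sub>R (- y - y)) = y" for y :: oct
    by (simp add: scaleR_diff_right flip: scaleR_add_left)
  ultimately show ?thesis
    by (simp add: stem_of_def omul_add_right omul_diff_right omul_sphS_sphS[OF K0(1)]
        flip: scaleR_2)
qed

lemma sprod_has_stem:
  assumes "has_stem f A B" "has_stem g C E"
  shows "has_stem (sprod f g) (\<lambda>\<alpha> \<beta>. omul (A \<alpha> \<beta>) (C \<alpha> \<beta>) - omul (B \<alpha> \<beta>) (E \<alpha> \<beta>))
                              (\<lambda>\<alpha> \<beta>. omul (A \<alpha> \<beta>) (E \<alpha> \<beta>) + omul (B \<alpha> \<beta>) (C \<alpha> \<beta>))"
  unfolding sprod_def using assms
  by (intro induced_has_stem) (simp_all add: stem_of_eq has_stem_real_axis omul_zero_left omul_zero_right)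

lemma sconj_has_stem:
  "has_stem f A B \<Longrightarrow> has_stem (sconj f) (\<lambda>\<alpha> \<beta>. ocnj (A \<alpha> \<beta>)) (\<lambda>\<alpha> \<beta>. ocnj (B \<alpha> \<beta>))"
  unfolding sconj_def by (intro induced_has_stem) (simp_all add: stem_of_eq has_stem_real_axis ocnj_zero)

lemma sprod_real_left:
  assumes f: "has_stem f (\<lambda>\<alpha> \<beta>. r \<alpha> \<beta> *\<^sub>R oone) (\<lambda>_ _. 0)" and g: "has_stem g A B"
  shows "sprod f g x = omul (f x) (g x)"
proof -
  obtain K where K: "K \<in> sphS" and x: "x = orl (oRe x) + norm (oIm x) *\<^sub>R K" by (rule oct_polar)
  show ?thesis
    by (subst (1 2 3) x, simp only: has_stemD[OF sprod_has_stem[OF f g] norm_ge_zero K]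
        has_stemD[OF f norm_ge_zero K] has_stemD[OF g norm_ge_zero K])
      (simp add: oct_linear_simps)
qed

lemma oinv_real: "oinv (r *\<^sub>R oone) = (1 / r) *\<^sub>R oone"
  by (cases "r = 0") (simp_all add: oinv_def ocnj_scaleR ocnj_oone norm_oone power2_eq_square)

lemma has_stem_inverse_square:
  assumes "has_stem f (\<lambda>\<alpha> \<beta>. r \<alpha> \<beta> *\<^sub>R oone) (\<lambda>_ _. 0)"
  shows "has_stem (\<lambda>y. omul (oinv (f y)) (oinv (f y))) (\<lambda>\<alpha> \<beta>. (1 / (r \<alpha> \<beta>)\<^sup>2) *\<^sub>R oone) (\<lambda>_ _. 0)"
  using assms by (simp add: has_stem_def oinv_real oct_linear_simps power2_eq_square)

lemma snorm_has_stem_imag: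
  assumes g: "has_stem g (\<lambda>\<alpha> \<beta>. F \<alpha> \<beta> *\<^sub>R oone) (\<lambda>\<alpha> \<beta>. G \<alpha> \<beta> *\<^sub>R d)" and d: "oRe d = 0"
  shows "has_stem (snorm g) (\<lambda>\<alpha> \<beta>. ((F \<alpha> \<beta>)\<^sup>2 - (G \<alpha> \<beta>)\<^sup>2 * (norm d)\<^sup>2) *\<^sub>R oone) (\<lambda>_ _. 0)"
  unfolding snorm_def
  by (rule has_stem_cong[OF sprod_has_stem[OF g sconj_has_stem[OF g]]])
    (simp_all add: oct_linear_simps ocnj_imag[OF d] omul_imag_self[OF d] power2_eq_square
      algebra_simps)

lemma sconj_sq_has_stem_imag:
  assumes g: "has_stem g (\<lambda>\<alpha> \<beta>. F \<alpha> \<beta> *\<^sub>R oone) (\<lambda>\<alpha> \<beta>. G \<alpha> \<beta> *\<^sub>R d)" and d: "oRe d = 0"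
  shows "has_stem (sprod (sconj g) (sconj g))
    (\<lambda>\<alpha> \<beta>. ((F \<alpha> \<beta>)\<^sup>2 + (G \<alpha> \<beta>)\<^sup>2 * (norm d)\<^sup>2) *\<^sub>R oone) (\<lambda>\<alpha> \<beta>. (- 2 * F \<alpha> \<beta> * G \<alpha> \<beta>) *\<^sub>R d)"
  by (rule has_stem_cong[OF sprod_has_stem[OF sconj_has_stem[OF g] sconj_has_stem[OF g]]])
    (simp_all add: oct_linear_simps ocnj_imag[OF d] omul_imag_self[OF d] power2_eq_square
      algebra_simps flip: scaleR_2)

lemma hfun_has_stem:
  "has_stem (hfun \<xi> a) (\<lambda>\<alpha> \<beta>. omul (ocnj \<xi> - \<alpha> *\<^sub>R oone) a) (\<lambda>\<alpha> \<beta>. \<beta> *\<^sub>R a)"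
  unfolding has_stem_def
proof (intro conjI allI impI)
  fix \<alpha> \<beta> :: real and K assume "K \<in> sphS"
  then show "hfun \<xi> a (orl \<alpha> + \<beta> *\<^sub>R K) = omul (ocnj \<xi> - \<alpha> *\<^sub>R oone) a + omul K (\<beta> *\<^sub>R a)"
    by (simp add: hfun_def ocnj_polar orl_def oct_linear_simps ocnj_sphS algebra_simps)
qed simp

lemma sprod_hfun:
  assumes F: "has_stem F (\<lambda>\<alpha> \<beta>. r \<alpha> \<beta> *\<^sub>R oone) B"
  shows "sprod F (hfun \<xi> a) x
    = sprod F (\<lambda>_. omul (ocnj \<xi>) a) x - omul (ocnj x) (sprod F (\<lambda>_. a) x)"
proof -
  obtain K where K: "K \<in> sphS" and x: "x = orl (oRe x) + norm (oIm x) *\<^sub>R K" by (rule oct_polar)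
  show ?thesis
    by (subst (1 2 3 4) x, simp only: ocnj_polar[OF K]
        has_stemD[OF sprod_has_stem[OF F hfun_has_stem] norm_ge_zero K]
        has_stemD[OF sprod_has_stem[OF F has_stem_const] norm_ge_zero K])
      (simp add: orl_def oct_linear_simps omul_sphS_sphS[OF K] algebra_simps)
qed

lemma norm_closest_point_subspace_sq:
  fixes S :: "'a::euclidean_space set"
  assumes S: "subspace S"
  shows "(norm x)\<^sup>2 = (norm (closest_point S x))\<^sup>2 + (norm (x - closest_point S x))\<^sup>2"
proof -
  define c where "c = closest_point S x"
  have cl: "closed S" and cv: "convex S" and ne: "S \<noteq> {}"
    using S closed_subspace subspace_imp_convex subspace_0 by blast+
  have c: "c \<in> S" unfolding c_def by (rule closest_point_in_set[OF cl ne])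
  have "inner (x - c) (0 - c) \<le> 0" "inner (x - c) (2 *\<^sub>R c - c) \<le> 0"
    unfolding c_def
    by (intro closest_point_dot[OF cv cl] subspace_0[OF S] subspace_scale[OF S c[unfolded c_def]])+
  then have "inner (x - c) c = 0"
    by (simp add: inner_diff_right scaleR_2 inner_add_right)
  then have "(norm (c + (x - c)))\<^sup>2 = (norm c)\<^sup>2 + (norm (x - c))\<^sup>2"
    by (simp only: power2_norm_eq_inner inner_add_left inner_add_right inner_commute[of c "x - c"])
  then show ?thesis unfolding c_def by simp
qed

lemma subspace_CI: "subspace (CI I)"
  by (simp add: CI_def)

lemma norm_projI_perpI_sq: "(norm \<xi>)\<^sup>2 = (norm (projI I \<xi>))\<^sup>2 + (norm (perpI I \<xi>))\<^sup>2"
  unfolding projI_def perpI_def by (rule norm_closest_point_subspace_sq[OF subspace_CI])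

lemma perpI_eq_0_iff: "perpI I \<xi> = 0 \<longleftrightarrow> \<xi> \<in> CI I"
proof -
  have "CI I \<noteq> {}" using subspace_0[OF subspace_CI] by blast
  from closest_point_refl[OF closed_subspace[OF subspace_CI] this, of \<xi>] show ?thesis
    by (simp add: perpI_def projI_def eq_commute[of \<xi>])
qed

lemma gI_has_stem:
  "has_stem (gI I \<xi>) (\<lambda>\<alpha> \<beta>. (\<alpha>\<^sup>2 + \<beta>\<^sup>2 - 2 * \<alpha> * oRe (projI I \<xi>) + (norm \<xi>)\<^sup>2) *\<^sub>R oone)
    (\<lambda>\<alpha> \<beta>. (2 * \<beta>) *\<^sub>R oIm (projI I \<xi>))"
  unfolding has_stem_def
proof (intro conjI allI impI)
  fix \<alpha> \<beta> :: real and K assume K: "K \<in> sphS"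
  define c where "c = projI I \<xi>"
  have c: "c = oRe c *\<^sub>R oone + oIm c" by (rule oRe_oIm_decomp)
  have cc: "ocnj c = oRe c *\<^sub>R oone - oIm c"
    by (subst c) (simp add: oct_linear_simps ocnj_imag[OF oRe_oIm])
  show "gI I \<xi> (orl \<alpha> + \<beta> *\<^sub>R K) = (\<alpha>\<^sup>2 + \<beta>\<^sup>2 - 2 * \<alpha> * oRe (projI I \<xi>) + (norm \<xi>)\<^sup>2) *\<^sub>R oone
      + omul K ((2 * \<beta>) *\<^sub>R oIm (projI I \<xi>))"
    unfolding gI_def c_def[symmetric] norm_polar_sq[OF K] ocnj_polar[OF K]
    by (subst (1 2) c)
      (simp add: cc orl_def oct_linear_simps ocnj_imag[OF oRe_oIm] algebra_simps flip: scaleR_2)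
qed simp

lemma NI_polar:
  assumes K: "K \<in> sphS"
  shows "NI I (orl \<alpha> + \<beta> *\<^sub>R K) \<xi> =
    ((\<alpha> - oRe (projI I \<xi>))\<^sup>2 - \<beta>\<^sup>2 + (norm (oIm (projI I \<xi>)))\<^sup>2)\<^sup>2
    + (2 * \<beta> * (\<alpha> - oRe (projI I \<xi>)))\<^sup>2
    + 2 * (norm (perpI I \<xi>))\<^sup>2 * ((\<alpha> - oRe (projI I \<xi>))\<^sup>2 + \<beta>\<^sup>2 + (norm (oIm (projI I \<xi>)))\<^sup>2)
    + ((norm (perpI I \<xi>))\<^sup>2)\<^sup>2"
proof -
  define c where "c = projI I \<xi>"
  have nc: "(norm c)\<^sup>2 = (oRe c)\<^sup>2 + (norm (oIm c))\<^sup>2"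
    by (subst oRe_oIm_decomp) (rule norm_real_imag_sq[OF oRe_oIm])
  have Delta: "Delta c (orl \<alpha> + \<beta> *\<^sub>R K)
      = orl (\<alpha>\<^sup>2 - \<beta>\<^sup>2 - 2 * oRe c * \<alpha> + (norm c)\<^sup>2) + (2 * \<alpha> * \<beta> - 2 * oRe c * \<beta>) *\<^sub>R K"
    unfolding Delta_def
    by (simp add: orl_def oct_linear_simps omul_sphS_self[OF K] power2_eq_square algebra_simps
        flip: scaleR_2)
  show ?thesis
    unfolding NI_def c_def[symmetric] Delta norm_polar_sq[OF K] oRe_polar[OF K] nc
    by (simp add: power2_eq_square power4_eq_xxxx algebra_simps)
qed

lemma snorm_gI_eq: "snorm (gI I \<xi>) x = NI I x \<xi> *\<^sub>R oone"
proof -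
  obtain K where K: "K \<in> sphS" and x: "x = orl (oRe x) + norm (oIm x) *\<^sub>R K" by (rule oct_polar)
  define c where "c = projI I \<xi>"
  have "(norm \<xi>)\<^sup>2 = (oRe c)\<^sup>2 + (norm (oIm c))\<^sup>2 + (norm (perpI I \<xi>))\<^sup>2"
    unfolding norm_projI_perpI_sq[of \<xi> I] c_def[symmetric]
    by (subst oRe_oIm_decomp) (simp add: norm_real_imag_sq[OF oRe_oIm])
  then show ?thesis
    by (subst (1 2) x, simp only: NI_polar[OF K]
        has_stemD[OF snorm_has_stem_imag[OF gI_has_stem oRe_oIm] norm_ge_zero K])
      (simp add: c_def[symmetric] omul_zero_right power2_eq_square algebra_simps)
qed

lemma sum_squares_polar_eq_0_iff:
  fixes u \<beta> n p :: real
  assumes "0 \<le> \<beta>" "0 \<le> n" "0 \<le> p"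
  shows "(u\<^sup>2 - \<beta>\<^sup>2 + n\<^sup>2)\<^sup>2 + (2 * \<beta> * u)\<^sup>2 + 2 * p * (u\<^sup>2 + \<beta>\<^sup>2 + n\<^sup>2) + p\<^sup>2 = 0
    \<longleftrightarrow> p = 0 \<and> u = 0 \<and> \<beta> = n"
proof
  assume sum: "(u\<^sup>2 - \<beta>\<^sup>2 + n\<^sup>2)\<^sup>2 + (2 * \<beta> * u)\<^sup>2 + 2 * p * (u\<^sup>2 + \<beta>\<^sup>2 + n\<^sup>2) + p\<^sup>2 = 0"
  have "0 \<le> 2 * p * (u\<^sup>2 + \<beta>\<^sup>2 + n\<^sup>2)" using assms by simp
  then have A: "u\<^sup>2 - \<beta>\<^sup>2 + n\<^sup>2 = 0" and B: "\<beta> * u = 0" and p: "p = 0"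
    using sum by (smt (verit) zero_le_power2 power_eq_0_iff mult_eq_0_iff)+
  show "p = 0 \<and> u = 0 \<and> \<beta> = n"
  proof (cases "\<beta> = 0")
    case True
    with A have "u\<^sup>2 + n\<^sup>2 = 0" by simp
    with True p show ?thesis by (simp add: sum_power2_eq_zero_iff)
  next
    case False
    with A B have "u = 0" "\<beta>\<^sup>2 = n\<^sup>2" by simp_all
    with p assms show ?thesis by simp
  qed
qed simp

lemma NI_eq_0_iff: "NI I x \<xi> = 0 \<longleftrightarrow> \<xi> \<in> CI I \<and> x \<in> sph_of \<xi>"
proof -
  obtain K where K: "K \<in> sphS" and x: "x = orl (oRe x) + norm (oIm x) *\<^sub>R K" by (rule oct_polar)
  have "NI I x \<xi> = 0 \<longleftrightarrow> (norm (perpI I \<xi>))\<^sup>2 = 0 \<and> oRe x - oRe (projI I \<xi>) = 0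
      \<and> norm (oIm x) = norm (oIm (projI I \<xi>))"
    by (subst x, subst NI_polar[OF K]) (rule sum_squares_polar_eq_0_iff; simp)
  also have "\<dots> \<longleftrightarrow> \<xi> \<in> CI I \<and> x \<in> sph_of \<xi>"
    using perpI_eq_0_iff[of I \<xi>] by (auto simp: sph_of_iff perpI_def)
  finally show ?thesis .
qed

lemma QI_eq_sprod: "QI I x \<xi> b = sprod (sprod (sconj (gI I \<xi>)) (sconj (gI I \<xi>))) (\<lambda>_. b) x"
proof -
  obtain K where K: "K \<in> sphS" and x: "x = orl (oRe x) + norm (oIm x) *\<^sub>R K" by (rule oct_polar)
  define \<alpha> where "\<alpha> = oRe x"
  define \<beta> where "\<beta> = norm (oIm x)"
  define c where "c = projI I \<xi>"
  define a0 where "a0 = oRe c"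
  define d where "d = oIm c"
  have d: "oRe d = 0" unfolding d_def by (rule oRe_oIm)
  have c: "c = a0 *\<^sub>R oone + d" unfolding a0_def d_def by (rule oRe_oIm_decomp)
  have nc: "(norm c)\<^sup>2 = a0\<^sup>2 + (norm d)\<^sup>2" unfolding c by (rule norm_real_imag_sq[OF d])
  txt \<open>After expansion only the terms in \<open>b\<close> and \<open>K (d b)\<close> survive on either side; their
    coefficients are compared coordinatewise.\<close>
  have "QI I (orl \<alpha> + \<beta> *\<^sub>R K) \<xi> b
    = sprod (sprod (sconj (gI I \<xi>)) (sconj (gI I \<xi>))) (\<lambda>_. b) (orl \<alpha> + \<beta> *\<^sub>R K)"
    unfolding has_stemD[OF sprod_has_stem[OF sconj_sq_has_stem_imag[OF gI_has_stem oRe_oIm]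
          has_stem_const] norm_ge_zero[of "oIm x", folded \<beta>_def] K]
      QI_def c_def[symmetric] a0_def[symmetric] d_def[symmetric] norm_polar_sq[OF K]
      ocnj_polar[OF K] nc
    by (simp add: c orl_def oct_linear_simps omul_sphS_sphS[OF K] omul_sphS_self[OF K]
        omul_imag_imag[OF d] omul_imag_self[OF d] ocnj_imag[OF d] algebra_simps)
      (simp only: prod_eq_iff fst_add snd_add fst_diff snd_diff fst_scaleR snd_scaleR
        fst_uminus snd_uminus real_scaleR_def, intro conjI; algebra)
  then show ?thesis using x by (simp add: \<alpha>_def \<beta>_def)
qed

lemma MI_eq_sprod: "MI I x \<xi> a = sprod (sprod (sconj (gI I \<xi>)) (sconj (gI I \<xi>))) (hfun \<xi> a) x"
  unfolding MI_def QI_eq_sprod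
  by (rule sprod_hfun[OF sconj_sq_has_stem_imag[OF gI_has_stem oRe_oIm], symmetric])

lemma kernel_eq: "kernel I \<xi> a x = (1 / (2 * pi\<^sup>2 * (NI I x \<xi>)\<^sup>2)) *\<^sub>R MI I x \<xi> a"
proof -
  note g = gI_has_stem[of I \<xi>]
  have "kernel I \<xi> a x = (1 / (2 * pi\<^sup>2)) *\<^sub>R
      omul (omul (oinv (snorm (gI I \<xi>) x)) (oinv (snorm (gI I \<xi>) x))) (MI I x \<xi> a)"
    unfolding kernel_def MI_eq_sprod
    by (subst sprod_real_left[OF has_stem_inverse_square[OF snorm_has_stem_imag[OF g oRe_oIm]]
          sprod_has_stem[OF sconj_sq_has_stem_imag[OF g oRe_oIm] hfun_has_stem]]) (rule refl)
  then show ?thesis by (simp add: snorm_gI_eq oinv_real oct_linear_simps power2_eq_square)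
qed

text \<open>The kernel formulas are pointwise algebraic identities, valid for all \<open>x\<close> and \<open>\<xi>\<close>
  (both sides vanish on \<open>\<Gamma>\<^sub>I\<close>, where \<open>oinv 0 = 0\<close> and \<open>1 / 0 = 0\<close>).\<close>

theorem lemma2p18:
  fixes D :: "(real \<times> real) set" and f :: "oct \<Rightarrow> oct" and I J :: oct
  assumes D_open: "open D" and D_ne: "D \<noteq> {}"
    and D_sym: "\<And>\<alpha> \<beta>. (\<alpha>, \<beta>) \<in> D \<Longrightarrow> (\<alpha>, - \<beta>) \<in> D"
    and Omega_conn: "connected (OmegaD D)"
    and D_bounded: "bounded D" and D_C1: "C1_boundary D"
    and f_slice: "slice_fun D f" and f_C1: "C1_on (OmegaD D) f"
    and IJ: "(I, J) \<in> NN"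
    and OmI_bounded: "bounded (OmegaI D I J)"
    and OmI_C1: "C1_boundary (phiI I J -` OmegaI D I J)"
  shows "{(x, \<xi>). NI I x \<xi> = 0} = GammaI I
    \<and> (\<forall>x \<xi>. (x, \<xi>) \<notin> GammaI I \<and> \<xi> \<in> bdI D I J \<longrightarrow>
          SfI D f I J x \<xi> = (1 / (2 * pi\<^sup>2 * (NI I x \<xi>)\<^sup>2)) *\<^sub>R MI I x \<xi> (omul (normalI D I J \<xi>) (f \<xi>)))
    \<and> (\<forall>x \<xi>. (x, \<xi>) \<notin> GammaI I \<and> \<xi> \<in> OmegaI D I J \<longrightarrow>
          VfI f I J x \<xi> = (1 / (2 * pi\<^sup>2 * (NI I x \<xi>)\<^sup>2)) *\<^sub>R MI I x \<xi> (DbarI I J f \<xi>))"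
proof -
  have "{(x, \<xi>). NI I x \<xi> = 0} = GammaI I"
    by (auto simp: GammaI_def NI_eq_0_iff)
  then show ?thesis
    by (simp add: SfI_def VfI_def kernel_eq)
qed

end
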